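(* Let $\ell\geq 1$ and let $G\subseteq\mathcal{G}_\Sigma^\ell$ be a non-empty finite set of generalized strings of length $\ell$. Then $\mathrm{NFA}(G)$ is a simple NFA.
   Context: For a finite alphabet $\Sigma$, $\mathcal{G}_\Sigma=\mathcal{P}(\Sigma)\setminus\{\emptyset\}$ and a generalized string is a finite string $g=g[1]\cdots g[|g|]$ over $\mathcal{G}_\Sigma$; $\mathcal{G}_\Sigma^\ell$ is the set of generalized strings of length $\ell$. Construction of $\mathrm{NFA}(G)$: let $\bar Q=\mathcal{P}(G)\times\{0,\dots,\ell\}$ and define $\mathrm{Parent}:\bar Q\times\Sigma\to\bar Q\cup\{\bot\}$ by $\mathrm{Parent}((H,k),\sigma)=(\{h\in H:\sigma\in h[k]\},k-1)$ if $k>0$ and $\bot$ if $k=0$. Set $Q_\ell=\{(G,\ell)\}$ and, for $i=\ell-1,\dots,0$, $Q_i=\{(H,i): H\subseteq G,\ H\neq\emptyset,\ \exists q\in Q_{i+1},\sigma\in\Sigma \text{ with } \mathrm{Parent}(q,\sigma)=(H,i)\}$. Let $Q=Q_0\cup\dots\cup Q_\ell$, $\Delta((H,k),\sigma)=\{q\in Q_{k+1}:\mathrm{Parent}(q,\sigma)=(H,k)\}$ if $k<\ell$ and $\emptyset$ if $k=\ell$, $Q_\alpha=Q_0$, $F=Q_\ell$. Then $\mathrm{NFA}(G)=(Q,\Sigma,\Delta,Q_\alpha,F)$. For an NFA, $\hat\Delta$ is the extension of $\Delta$ to strings ($\hat\Delta(q,\varepsilon)=\{q\}$, $\hat\Delta(q,\sigma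 s)=\bigcup_{p\in\Delta(q,\sigma)}\hat\Delta(p,s)$), the language of a state is $\mathcal{L}(q)=\{s\in\Sigma^*:\hat\Delta(q,s)\cap F\neq\emptyset\}$, and a state $q$ is accessible if $q\in\hat\Delta(q_\alpha,s)$ for some $q_\alpha\in Q_\alpha$, $s\in\Sigma^*$. An NFA is called simple if all its states are accessible and the languages $\mathcal{L}(q)$, $q\in Q$, are non-empty and pairwise disjoint. *)

theory Defs
  imports Main
begin

type_synonym ('s, 'a) nfa = "'s set \<times> 'a set \<times> ('s \<Rightarrow> 'a \<Rightarrow> 's set) \<times> 's set \<times> 's set"

fun delta_hat :: "('s \<Rightarrow> 'a \<Rightarrow> 's set) \<Rightarrow> 's \<Rightarrow> 'a list \<Rightarrow> 's set" where
  "delta_hat \<Delta> q [] = {q}"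
| "delta_hat \<Delta> q (\<sigma> # s) = (\<Union>p\<in>\<Delta> q \<sigma>. delta_hat \<Delta> p s)"

definition nfa_lang :: "('s, 'a) nfa \<Rightarrow> 's \<Rightarrow> 'a list set" where
  "nfa_lang A q = (case A of (Q, \<Sigma>, \<Delta>, Qa, F) \<Rightarrow>
     {s \<in> lists \<Sigma>. delta_hat \<Delta> q s \<inter> F \<noteq> {}})"

definition nfa_accessible :: "('s, 'a) nfa \<Rightarrow> 's \<Rightarrow> bool" where
  "nfa_accessible A q = (case A of (Q, \<Sigma>, \<Delta>, Qa, F) \<Rightarrow>
     (\<exists>qa\<in>Qa. \<exists>s\<in>lists \<Sigma>. q \<in> delta_hat \<Delta> qa s))"

definition simple_nfa :: "('s, 'a) nfa \<Rightarrow> bool" where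
  "simple_nfa A = (case A of (Q, \<Sigma>, \<Delta>, Qa, F) \<Rightarrow>
     (\<forall>q\<in>Q. nfa_accessible A q) \<and>
     (\<forall>q\<in>Q. nfa_lang A q \<noteq> {}) \<and>
     (\<forall>p\<in>Q. \<forall>q\<in>Q. p \<noteq> q \<longrightarrow> nfa_lang A p \<inter> nfa_lang A q = {}))"

text \<open>A generalized string over Sigma is a list of non-empty subsets of Sigma;
  position k (1-based, as in the paper) of g is g ! (k - 1).\<close>

definition gen_strings :: "'a set \<Rightarrow> nat \<Rightarrow> 'a set list set" where
  "gen_strings \<Sigma> l = {g. length g = l \<and> (\<forall>x\<in>set g. x \<noteq> {} \<and> x \<subseteq> \<Sigma>)}"

type_synonym 'a gstate = "'a set list set \<times> nat"

definition Parent :: "'a gstate \<Rightarrow> 'a \<Rightarrow> 'a gstate option" where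
  "Parent q \<sigma> = (case q of (H, k) \<Rightarrow>
     if k > 0 then Some ({h\<in>H. \<sigma> \<in> h ! (k - 1)}, k - 1) else None)"

text \<open>lev n is the level Q_{l-n}, built downward from Q_l = {(G,l)}.\<close>
fun lev :: "'a set \<Rightarrow> 'a set list set \<Rightarrow> nat \<Rightarrow> nat \<Rightarrow> 'a gstate set" where
  "lev \<Sigma> G l 0 = {(G, l)}"
| "lev \<Sigma> G l (Suc n) = {(H, i) | H i. i = l - Suc n \<and> H \<subseteq> G \<and> H \<noteq> {} \<and>
       (\<exists>q\<in>lev \<Sigma> G l n. \<exists>\<sigma>\<in>\<Sigma>. Parent q \<sigma> = Some (H, i))}"

definition Qlev :: "'a set \<Rightarrow> 'a set list set \<Rightarrow> nat \<Rightarrow> nat \<Rightarrow> 'a gstate set" where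
  "Qlev \<Sigma> G l i = (if i \<le> l then lev \<Sigma> G l (l - i) else {})"

definition NFA_of :: "'a set \<Rightarrow> nat \<Rightarrow> 'a set list set \<Rightarrow> ('a gstate, 'a) nfa" where
  "NFA_of \<Sigma> l G =
     ((\<Union>i\<in>{0..l}. Qlev \<Sigma> G l i),
      \<Sigma>,
      (\<lambda>(H, k) \<sigma>. if k < l \<and> \<sigma> \<in> \<Sigma>
                   then {q \<in> Qlev \<Sigma> G l (k + 1). Parent q \<sigma> = Some (H, k)} else {}),
      Qlev \<Sigma> G l 0,
      Qlev \<Sigma> G l l)"

end

theory Submission
  imports Defs
begin

(* For a string s of length l - k, call the set of those g in G
   whose positions k+1..l accept the letters of s the "compatible" set of s at
   level k.  We show:
   (1) the states at level k are exactly the non-empty compatible sets of the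
       strings s of length l - k over Sigma (together with the level k);
   (2) reading a string u from the state (compatible (u @ v) at k, k) leads to
       (compatible v at k + |u|, k + |u|), and every run reaching the final
       state (G, l) is of this form;
   (3) hence the language of a state (H, k) is the set of strings s of length
       l - k with compatible set H at level k.
   By (3) a string determines the unique state whose language contains it, so
   languages are pairwise disjoint; they are non-empty by (1).  Accessibility
   of (H, k) follows by picking some g in H and prefixing a witness s of (1)
   with k letters chosen from the first k positions of g. *)

definition compatible :: "'a set list set \<Rightarrow> 'a list \<Rightarrow> nat \<Rightarrow> 'a set list set" where
  "compatible G s k = {g \<in> G. \<forall>j<length s. s ! j \<in> g ! (k + j)}"

lemma compatible_Nil [simp]: "compatible G [] k = G"
  by (simp add: compatible_def)

text \<open>Reading one more letter in front filters the compatible set by one position;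
  this is exactly what the map Parent does.\<close>
lemma compatible_Cons: "compatible G (\<sigma> # s) k = {g \<in> compatible G s (Suc k). \<sigma> \<in> g ! k}"
  unfolding compatible_def by (auto simp: less_Suc_eq_0_disj)

lemma compatible_subset: "compatible G s k \<subseteq> G"
  by (auto simp: compatible_def)

lemma compatible_append:
  "compatible G (u @ v) k = {g \<in> compatible G v (k + length u). \<forall>j<length u. u ! j \<in> g ! (k + j)}"
proof (induction u arbitrary: k)
  case (Cons \<sigma> u)
  show ?case
    by (auto simp: compatible_Cons Cons.IH less_Suc_eq_0_disj)
qed simp

lemma gen_string_prefix_witness:
  assumes "g \<in> gen_strings \<Sigma> l" and "k \<le> l"
  obtains u where "u \<in> lists \<Sigma>" "length u = k" "\<forall>j<k. u ! j \<in> g ! j"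
proof -
  have pos: "g ! j \<noteq> {} \<and> g ! j \<subseteq> \<Sigma>" if "j < k" for j
    using assms that by (auto simp: gen_strings_def)
  define u where "u = map (\<lambda>j. SOME x. x \<in> g ! j) [0..<k]"
  have letter: "u ! j \<in> g ! j" if "j < k" for j
    using pos[OF that] that by (auto simp: u_def intro: someI_ex)
  have "u \<in> lists \<Sigma>"
    using letter pos by (fastforce simp: u_def in_set_conv_nth)
  then show thesis
    using that letter by (simp add: u_def)
qed

lemma Parent_Suc [simp]: "Parent (H, Suc k) \<sigma> = Some ({h \<in> H. \<sigma> \<in> h ! k}, k)"
  by (simp add: Parent_def)

lemma Qlev_level: "(H, i) \<in> Qlev \<Sigma> G l k \<Longrightarrow> i = k \<and> k \<le> l"
proof -
  have "(H, i) \<in> lev \<Sigma> G l n \<Longrightarrow> i = l - n" for n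
    by (cases n) auto
  then show "(H, i) \<in> Qlev \<Sigma> G l k \<Longrightarrow> i = k \<and> k \<le> l"
    unfolding Qlev_def by (fastforce split: if_splits)
qed

lemma Qlev_top: "Qlev \<Sigma> G l l = {(G, l)}"
  by (simp add: Qlev_def)

lemma Qlev_below_top:
  assumes "k < l"
  shows "(H, k) \<in> Qlev \<Sigma> G l k \<longleftrightarrow>
    H \<subseteq> G \<and> H \<noteq> {} \<and> (\<exists>q\<in>Qlev \<Sigma> G l (Suc k). \<exists>\<sigma>\<in>\<Sigma>. Parent q \<sigma> = Some (H, k))"
proof -
  have "Qlev \<Sigma> G l k = lev \<Sigma> G l (Suc (l - Suc k))"
    and "Qlev \<Sigma> G l (Suc k) = lev \<Sigma> G l (l - Suc k)"
    and "l - Suc (l - Suc k) = k"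
    using assms by (simp_all add: Qlev_def Suc_diff_Suc)
  then show ?thesis by auto
qed

text \<open>Every state of level k arises from a string of length l - k, the
  string read on the way down from the top state.\<close>
lemma Qlev_witness:
  assumes "G \<noteq> {}" and "(H, k) \<in> Qlev \<Sigma> G l k"
  shows "H \<noteq> {} \<and> (\<exists>s\<in>lists \<Sigma>. length s + k = l \<and> compatible G s k = H)"
proof -
  have "k \<le> l" using Qlev_level[OF assms(2)] by simp
  with assms(2) show ?thesis
  proof (induction "l - k" arbitrary: H k)
    case 0
    then show ?case using assms(1) by (auto simp: Qlev_top intro: bexI[of _ "[]"])
  next
    case (Suc n)
    then have "k < l" by simp
    with Suc.prems obtain q \<sigma> where "q \<in> Qlev \<Sigma> G l (Suc k)" and "\<sigma> \<in> \<Sigma>" and "H \<noteq> {}"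
      and parent: "Parent q \<sigma> = Some (H, k)"
      by (auto simp: Qlev_below_top)
    moreover obtain H' k' where q: "q = (H', k')" by fastforce
    ultimately have "k' = Suc k" and top: "(H', Suc k) \<in> Qlev \<Sigma> G l (Suc k)"
      using Qlev_level by blast+
    with parent q have H: "H = {h \<in> H'. \<sigma> \<in> h ! k}"
      by simp
    have "n = l - Suc k" using Suc.hyps(2) by simp
    then obtain s where "s \<in> lists \<Sigma>" "length s + Suc k = l" "compatible G s (Suc k) = H'"
      using Suc.hyps(1)[OF _ top] \<open>k < l\<close> by auto
    with H \<open>\<sigma> \<in> \<Sigma>\<close> \<open>H \<noteq> {}\<close> show ?case
      by (auto simp: compatible_Cons intro!: bexI[of _ "\<sigma> # s"])
  qed
qed

text \<open>Conversely, every non-empty compatible set of a string of length l - k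
  is a state of level k: its parent chain leads up to the top state.\<close>
lemma compatible_in_Qlev:
  assumes "s \<in> lists \<Sigma>" and "length s + k = l" and "compatible G s k \<noteq> {}"
  shows "(compatible G s k, k) \<in> Qlev \<Sigma> G l k"
  using assms
proof (induction s arbitrary: k rule: lists.induct)
  case Nil
  then show ?case by (simp add: Qlev_top)
next
  case (Cons \<sigma> s)
  then have "k < l" and "compatible G s (Suc k) \<noteq> {}"
    by (auto simp: compatible_Cons)
  with Cons.IH Cons.prems(1) have top: "(compatible G s (Suc k), Suc k) \<in> Qlev \<Sigma> G l (Suc k)"
    by simp
  have "Parent (compatible G s (Suc k), Suc k) \<sigma> = Some (compatible G (\<sigma> # s) k, k)"
    by (simp add: compatible_Cons)
  with top Cons.hyps(1) Cons.prems(2) show ?case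
    unfolding Qlev_below_top[OF \<open>k < l\<close>] using compatible_subset by blast
qed

lemma Qlev_compatible:
  assumes "G \<noteq> {}"
  shows "(H, k) \<in> Qlev \<Sigma> G l k \<longleftrightarrow>
    H \<noteq> {} \<and> (\<exists>s\<in>lists \<Sigma>. length s + k = l \<and> compatible G s k = H)"
proof
  assume "H \<noteq> {} \<and> (\<exists>s\<in>lists \<Sigma>. length s + k = l \<and> compatible G s k = H)"
  then obtain s where "s \<in> lists \<Sigma>" "length s + k = l" "compatible G s k \<noteq> {}"
    and "compatible G s k = H" by blast
  then show "(H, k) \<in> Qlev \<Sigma> G l k" using compatible_in_Qlev by metis
qed (rule Qlev_witness[OF assms])

definition gtrans :: "'a set \<Rightarrow> 'a set list set \<Rightarrow> nat \<Rightarrow> 'a gstate \<Rightarrow> 'a \<Rightarrow> 'a gstate set" where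
  "gtrans \<Sigma> G l = (\<lambda>(H, k) \<sigma>. if k < l \<and> \<sigma> \<in> \<Sigma>
     then {q \<in> Qlev \<Sigma> G l (k + 1). Parent q \<sigma> = Some (H, k)} else {})"

lemma NFA_of_gtrans:
  "NFA_of \<Sigma> l G = ((\<Union>i\<in>{0..l}. Qlev \<Sigma> G l i), \<Sigma>, gtrans \<Sigma> G l, Qlev \<Sigma> G l 0, Qlev \<Sigma> G l l)"
  by (simp add: NFA_of_def gtrans_def)

lemma run_compatible:
  assumes "u @ v \<in> lists \<Sigma>" "length u + length v + k = l" "compatible G (u @ v) k \<noteq> {}"
  shows "(compatible G v (k + length u), k + length u)
           \<in> delta_hat (gtrans \<Sigma> G l) (compatible G (u @ v) k, k) u"
  using assms
proof (induction u arbitrary: k)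
  case (Cons \<sigma> u)
  then have "k < l" and ne: "compatible G (u @ v) (Suc k) \<noteq> {}"
    by (auto simp: compatible_Cons)
  have "G \<noteq> {}" using Cons.prems(3) compatible_subset by blast
  then have "(compatible G (u @ v) (Suc k), Suc k) \<in> Qlev \<Sigma> G l (Suc k)"
    using Cons.prems ne unfolding Qlev_compatible[OF \<open>G \<noteq> {}\<close>]
    by (intro conjI bexI[of _ "u @ v"]) auto
  then have step: "(compatible G (u @ v) (Suc k), Suc k)
      \<in> gtrans \<Sigma> G l (compatible G ((\<sigma> # u) @ v) k, k) \<sigma>"
    using \<open>k < l\<close> Cons.prems(1) by (simp add: gtrans_def compatible_Cons)
  have "(compatible G v (Suc k + length u), Suc k + length u)
      \<in> delta_hat (gtrans \<Sigma> G l) (compatible G (u @ v) (Suc k), Suc k) u"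
    using Cons.IH[of "Suc k"] Cons.prems ne by simp
  with step show ?case by auto
qed simp

lemma accepting_run:
  "delta_hat (gtrans \<Sigma> G l) (H, k) s \<inter> Qlev \<Sigma> G l l \<noteq> {}
     \<Longrightarrow> length s + k = l \<and> H = compatible G s k"
proof (induction s arbitrary: H k)
  case Nil
  then show ?case by (auto simp: Qlev_top)
next
  case (Cons \<sigma> s)
  then obtain H' k' where step: "(H', k') \<in> gtrans \<Sigma> G l (H, k) \<sigma>"
    and rest: "delta_hat (gtrans \<Sigma> G l) (H', k') s \<inter> Qlev \<Sigma> G l l \<noteq> {}"
    by auto
  then have "k' = Suc k" and H: "H = {h \<in> H'. \<sigma> \<in> h ! k}"
    by (auto simp: gtrans_def split: if_splits dest: Qlev_level)
  with Cons.IH[OF rest] show ?case by (simp add: compatible_Cons)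
qed

lemma lang_state:
  assumes "G \<noteq> {}" and "(H, k) \<in> Qlev \<Sigma> G l k"
  shows "nfa_lang (NFA_of \<Sigma> l G) (H, k) = {s \<in> lists \<Sigma>. length s + k = l \<and> compatible G s k = H}"
proof (intro set_eqI iffI)
  fix s assume "s \<in> nfa_lang (NFA_of \<Sigma> l G) (H, k)"
  then show "s \<in> {s \<in> lists \<Sigma>. length s + k = l \<and> compatible G s k = H}"
    unfolding NFA_of_gtrans nfa_lang_def using accepting_run by fastforce
next
  fix s assume s: "s \<in> {s \<in> lists \<Sigma>. length s + k = l \<and> compatible G s k = H}"
  moreover have "H \<noteq> {}" using assms by (simp add: Qlev_compatible)
  ultimately have "(G, l) \<in> delta_hat (gtrans \<Sigma> G l) (H, k) s"
    using run_compatible[of s "[]" \<Sigma> k l G] by (simp add: add.commute)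
  with s show "s \<in> nfa_lang (NFA_of \<Sigma> l G) (H, k)"
    unfolding NFA_of_gtrans nfa_lang_def by (auto simp: Qlev_top)
qed

text \<open>Every state is accessible: an initial state is reached from a string
  extended by a prefix read off some generalized string in H.\<close>
lemma accessible_state:
  assumes "G \<subseteq> gen_strings \<Sigma> l" and "G \<noteq> {}" and "(H, k) \<in> Qlev \<Sigma> G l k"
  shows "nfa_accessible (NFA_of \<Sigma> l G) (H, k)"
proof -
  obtain s g where s: "s \<in> lists \<Sigma>" "length s + k = l" "compatible G s k = H" and "g \<in> H"
    using assms(2,3) by (auto simp: Qlev_compatible)
  then have "g \<in> gen_strings \<Sigma> l"
    using assms(1) compatible_subset by blast
  then obtain u where u: "u \<in> lists \<Sigma>" "length u = k" "\<forall>j<k. u ! j \<in> g ! j"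
    using gen_string_prefix_witness s(2) by (metis le_add2)
  have "g \<in> compatible G (u @ s) 0"
    using \<open>g \<in> H\<close> s(3) u by (simp add: compatible_append)
  then have ne: "compatible G (u @ s) 0 \<noteq> {}" by blast
  have init: "(compatible G (u @ s) 0, 0) \<in> Qlev \<Sigma> G l 0"
    using ne u s unfolding Qlev_compatible[OF assms(2)]
    by (intro conjI bexI[of _ "u @ s"]) auto
  have "(H, k) \<in> delta_hat (gtrans \<Sigma> G l) (compatible G (u @ s) 0, 0) u"
    using run_compatible[of u s \<Sigma> 0 l G] u s ne by simp
  with init u(1) show ?thesis
    unfolding nfa_accessible_def NFA_of_gtrans by auto
qed

lemma lang_state_nonempty:
  assumes "G \<noteq> {}" and "(H, k) \<in> Qlev \<Sigma> G l k"
  shows "nfa_lang (NFA_of \<Sigma> l G) (H, k) \<noteq> {}"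
proof -
  obtain s where "s \<in> lists \<Sigma>" "length s + k = l" "compatible G s k = H"
    using assms(2) Qlev_compatible[OF assms(1)] by blast
  then show ?thesis using lang_state[OF assms] by blast
qed

lemma lang_states_disjoint:
  assumes "G \<noteq> {}" and "(H, k) \<in> Qlev \<Sigma> G l k" and "(H', k') \<in> Qlev \<Sigma> G l k'"
    and "(H, k) \<noteq> (H', k')"
  shows "nfa_lang (NFA_of \<Sigma> l G) (H, k) \<inter> nfa_lang (NFA_of \<Sigma> l G) (H', k') = {}"
  using assms(4) lang_state[OF assms(1,2)] lang_state[OF assms(1,3)] by auto

lemma NFA_of_state_cases:
  assumes "q \<in> (\<Union>i\<in>{0..l}. Qlev \<Sigma> G l i)"
  obtains H k where "q = (H, k)" "(H, k) \<in> Qlev \<Sigma> G l k"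
  using assms by (cases q) (auto dest: Qlev_level)

lemma simple_nfaI:
  assumes "A = (Q, S, D, Qa, F)"
    and "\<forall>q\<in>Q. nfa_accessible A q" and "\<forall>q\<in>Q. nfa_lang A q \<noteq> {}"
    and "\<forall>p\<in>Q. \<forall>q\<in>Q. p \<noteq> q \<longrightarrow> nfa_lang A p \<inter> nfa_lang A q = {}"
  shows "simple_nfa A"
  using assms by (simp add: simple_nfa_def)

theorem mainTheorem6:
  fixes \<Sigma> :: "'a set" and G :: "'a set list set" and l :: nat
  assumes "finite \<Sigma>"
    and "l \<ge> 1"
    and "G \<subseteq> gen_strings \<Sigma> l"
    and "finite G"
    and "G \<noteq> {}"
  shows "simple_nfa (NFA_of \<Sigma> l G)"
proof (rule simple_nfaI[OF NFA_of_gtrans]; intro ballI impI)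
  fix q assume "q \<in> (\<Union>i\<in>{0..l}. Qlev \<Sigma> G l i)"
  then obtain H k where q: "q = (H, k)" "(H, k) \<in> Qlev \<Sigma> G l k"
    by (rule NFA_of_state_cases)
  show "nfa_accessible (NFA_of \<Sigma> l G) q"
    unfolding q(1) by (rule accessible_state[OF assms(3,5) q(2)])
  show "nfa_lang (NFA_of \<Sigma> l G) q \<noteq> {}"
    unfolding q(1) by (rule lang_state_nonempty[OF assms(5) q(2)])
next
  fix p q
  assume "p \<in> (\<Union>i\<in>{0..l}. Qlev \<Sigma> G l i)" "q \<in> (\<Union>i\<in>{0..l}. Qlev \<Sigma> G l i)" "p \<noteq> q"
  moreover obtain H k where "p = (H, k)" "(H, k) \<in> Qlev \<Sigma> G l k"
    using NFA_of_state_cases calculation(1) .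
  moreover obtain H' k' where "q = (H', k')" "(H', k') \<in> Qlev \<Sigma> G l k'"
    using NFA_of_state_cases calculation(2) .
  ultimately show "nfa_lang (NFA_of \<Sigma> l G) p \<inter> nfa_lang (NFA_of \<Sigma> l G) q = {}"
    using lang_states_disjoint[OF assms(5)] by simp
qed

end
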